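(* Let $\mathbf d=(d_1,\ldots,d_n)$ be a graphical degree sequence and let $H_1$ and $H_2$ be two edge-disjoint graphs on $[n]$. Suppose that $\mathbf d^{H_1}\preceq \mathbf d$ and that $uv\notin H_1\cup H_2$. Then \[ \mathbb P\big(uv\in \mathcal G(n,\mathbf d)\mid H_1^+, H_2^-\big)\le \frac{(d_u-d^{H_1}_u)(d_v-d^{H_1}_v)}{M-2e(H_1)}\cdot f(\mathbf d,H_1,H_2), \] \[ \mathbb P\big(uv\in \mathcal G(n,\mathbf d)\mid H_1^+, H_2^-\big)\ge \frac{(d_u-d^{H_1}_u)(d_v-d^{H_1}_v)}{M-2e(H_1)}\cdot g(\mathbf d,H_1,H_2), \] where \[ f(\mathbf d,H_1,H_2)=\left(1-\frac{3J(\mathbf d)+\Delta(8+d_u^{H_2}+d_v^{H_2})}{M-2e(H_1)}-\frac{2e(H_2)\Delta^2}{(M-2e(H_1))^2}+\frac{(d_v-d_v^{H_1})(d_u-d_u^{H_1})}{M-2e(H_1)}\right)^{-1}, \] \[ g(\mathbf d,H_1,H_2)=\left(1- \frac{2J(\mathbf d)+6\Delta+2\Delta(H_2)\Delta}{M-2e(H_1)} \right)\left(1+ \frac{(d_v-d_v^{H_1})(d_u-d_u^{H_1})}{M-2e(H_1)} \right)^{-1}. \]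
   Context: For a sequence $\mathbf d=(d_1,\ldots,d_n)$ of nonnegative integers, $\mathcal G(n,\mathbf d)$ denotes a uniformly random simple graph on vertex set $[n]$ in which vertex $i$ has degree $d_i$ for every $i$; $\mathbf d$ is graphical if at least one such graph exists. $\Delta=\max_i d_i$, $M=\sum_{i=1}^n d_i$, and $J(\mathbf d)$ is the sum of the $\Delta$ largest entries of $\mathbf d$ (i.e. if $d_1\ge d_2\ge\cdots\ge d_n$, then $J(\mathbf d)=\sum_{i=1}^{\Delta}d_i$). For a graph $H$ on $[n]$, $e(H)$ is its number of edges, $\Delta(H)$ its maximum degree, and $d^H_i$ the degree of vertex $i$ in $H$; $\mathbf d^H=(d^H_1,\dots,d^H_n)$, and $\mathbf d^H\preceq\mathbf d$ means $d^H_i\le d_i$ for all $i$. Graphs on $[n]$ are identified with their edge sets; two such graphs are disjoint if their edge sets are disjoint. $H^+$ denotes the event $H\subseteq\mathcal G(n,\mathbf d)$, and $H^-$ denotes the event that $\mathcal G(n,\mathbf d)$ contains no edge of $H$.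
   Formalization: The upper bound with $f(\mathbf d,H_1,H_2)$ holds only under the extra condition that the bracket whose inverse defines f is positive; if that bracket is nonpositive, no upper bound is claimed. The statement above fails without it. *)

theory Defs
  imports Complex_Main
begin

text \<open>Graphs on the vertex set [n] = {1..n} are identified with their edge sets,
  an edge being a 2-element set of vertices.\<close>

definition all_edges :: "nat \<Rightarrow> nat set set" where
  "all_edges n = {e. \<exists>i j. i \<in> {1..n} \<and> j \<in> {1..n} \<and> i \<noteq> j \<and> e = {i, j}}"

definition graph_on :: "nat \<Rightarrow> nat set set \<Rightarrow> bool" where
  "graph_on n H \<longleftrightarrow> H \<subseteq> all_edges n"

definition deg :: "nat set set \<Rightarrow> nat \<Rightarrow> nat" where
  "deg H i = card {e \<in> H. i \<in> e}"

definition max_deg_graph :: "nat \<Rightarrow> nat set set \<Rightarrow> nat" where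
  "max_deg_graph n H = Max (insert 0 (deg H ` {1..n}))"

definition realizations :: "nat \<Rightarrow> (nat \<Rightarrow> nat) \<Rightarrow> nat set set set" where
  "realizations n d = {G. graph_on n G \<and> (\<forall>i\<in>{1..n}. deg G i = d i)}"

definition graphical :: "nat \<Rightarrow> (nat \<Rightarrow> nat) \<Rightarrow> bool" where
  "graphical n d \<longleftrightarrow> realizations n d \<noteq> {}"

definition Delta :: "nat \<Rightarrow> (nat \<Rightarrow> nat) \<Rightarrow> nat" where
  "Delta n d = Max (insert 0 (d ` {1..n}))"

definition Msum :: "nat \<Rightarrow> (nat \<Rightarrow> nat) \<Rightarrow> nat" where
  "Msum n d = (\<Sum>i\<in>{1..n}. d i)"

definition Jsum :: "nat \<Rightarrow> (nat \<Rightarrow> nat) \<Rightarrow> nat" where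
  "Jsum n d = sum_list (take (Delta n d) (rev (sort (map d [1..<n+1]))))"

text \<open>Probability, for the uniform random graph G(n,d), that uv is an edge
  conditioned on H1 \<subseteq> G and G having no edge of H2.\<close>
definition cond_prob_edge ::
  "nat \<Rightarrow> (nat \<Rightarrow> nat) \<Rightarrow> nat set set \<Rightarrow> nat set set \<Rightarrow> nat \<Rightarrow> nat \<Rightarrow> real" where
  "cond_prob_edge n d H1 H2 u v =
     real (card {G \<in> realizations n d. H1 \<subseteq> G \<and> G \<inter> H2 = {} \<and> {u, v} \<in> G})
     / real (card {G \<in> realizations n d. H1 \<subseteq> G \<and> G \<inter> H2 = {}})"

end

theory Submission
  imports Defs "HOL-Library.Multiset"
begin

text \<open>Write \<open>\<Omega>\<close> for the realisations \<open>G\<close> of \<open>d\<close> with \<open>H\<^sub>1 \<subseteq> G\<close> and \<open>G \<inter> H\<^sub>2 = {}\<close>, and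
  \<open>\<Omega>\<^sup>+\<close>, \<open>\<Omega>\<^sup>-\<close> for those with and without the edge \<open>uv\<close>; the conditional probability
  is \<open>|\<Omega>\<^sup>+| / (|\<Omega>\<^sup>+| + |\<Omega>\<^sup>-|)\<close>. Both bounds come from double counting two switchings
  that delete only edges of \<open>G - H\<^sub>1\<close> and add only edges outside \<open>G \<union> H\<^sub>2\<close>, so they stay
  inside \<open>\<Omega>\<close>. A switching is chosen along the \<open>M' = M - 2e(H\<^sub>1)\<close> arcs (oriented edges)
  of \<open>G - H\<^sub>1\<close>, and each side condition excludes the arcs starting (or ending) at a given
  vertex, at a neighbour of a vertex, or at an \<open>H\<^sub>2\<close>-neighbour of a vertex: at most \<open>\<Delta>\<close>, \<open>J\<close>
  and \<open>d\<^sup>H\<^sup>2 \<Delta>\<close> arcs respectively.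

  Forward, \<open>\<Omega>\<^sup>+ \<rightarrow> \<Omega>\<^sup>-\<close>: \<open>uv, ab \<mapsto> ua, vb\<close>, admissible for all but
  \<open>T\<^sub>1 = 2J + 4\<Delta> + \<Delta>(d\<^sup>H\<^sup>2\<^sub>u + d\<^sup>H\<^sup>2\<^sub>v)\<close> arcs \<open>ab\<close>. It is determined by the result
  together with \<open>(a, b)\<close>, one of the \<open>x = (d\<^sub>u - d\<^sup>H\<^sup>1\<^sub>u)(d\<^sub>v - d\<^sup>H\<^sup>1\<^sub>v)\<close> pairs of
  neighbours of \<open>u\<close> and \<open>v\<close> along edges outside \<open>H\<^sub>1\<close>; hence \<open>|\<Omega>\<^sup>+| (M' - T\<^sub>1) \<le> |\<Omega>\<^sup>-| x\<close>.
  Backward, \<open>\<Omega>\<^sup>- \<rightarrow> \<Omega>\<^sup>+\<close>: for such a pair and an arc \<open>cw\<close>, \<open>ua, vb, cw \<mapsto> uv, ac, bw\<close>,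
  admissible for all but \<open>T\<^sub>2 = 2J + 6\<Delta> + 2\<Delta>(H\<^sub>2)\<Delta>\<close> arcs \<open>cw\<close> and determined by the
  result together with the pair of arcs \<open>(ac, bw)\<close>; hence \<open>|\<Omega>\<^sup>-| x (M' - T\<^sub>2) \<le> |\<Omega>\<^sup>+| M'\<^sup>2\<close>.\<close>

section \<open>Graphs on [n]\<close>

lemma finite_all_edges: "finite (all_edges n)"
proof -
  have "all_edges n \<subseteq> (\<lambda>(i, j). {i, j}) ` ({1..n} \<times> {1..n})"
    unfolding all_edges_def by auto
  then show ?thesis by (rule finite_subset) auto
qed

lemma graph_on_finite: "graph_on n E \<Longrightarrow> finite E"
  unfolding graph_on_def using finite_all_edges finite_subset by blast

lemma graph_on_subset: "graph_on n G \<Longrightarrow> E \<subseteq> G \<Longrightarrow> graph_on n E"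
  unfolding graph_on_def by blast

lemma graph_on_edgeE:
  assumes "graph_on n E" "e \<in> E"
  obtains a b where "e = {a, b}" "a \<in> {1..n}" "b \<in> {1..n}" "a \<noteq> b"
  using assms unfolding graph_on_def all_edges_def by blast

lemma graph_on_edgeD:
  assumes "graph_on n E" "{a, b} \<in> E"
  shows "a \<in> {1..n}" "b \<in> {1..n}" "a \<noteq> b"
  using graph_on_edgeE[OF assms] by (auto simp: doubleton_eq_iff)

lemma finite_realizations: "finite (realizations n d)"
proof -
  have "realizations n d \<subseteq> Pow (all_edges n)"
    unfolding realizations_def graph_on_def by auto
  then show ?thesis by (rule finite_subset) (simp add: finite_all_edges)
qed

lemma deg_mono: "finite G \<Longrightarrow> E \<subseteq> G \<Longrightarrow> deg E i \<le> deg G i"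
  unfolding deg_def by (rule card_mono) auto

lemma deg_insert:
  assumes "finite E"
  shows "deg (insert e E) i = deg E i + (if i \<in> e \<and> e \<notin> E then 1 else 0)"
proof -
  have "{x \<in> insert e E. i \<in> x} = (if i \<in> e then insert e {x \<in> E. i \<in> x} else {x \<in> E. i \<in> x})"
    by auto
  then show ?thesis unfolding deg_def using assms by (simp add: card_insert_if)
qed

lemma deg_empty: "deg {} i = 0"
  unfolding deg_def by simp

lemma deg_Diff:
  assumes "finite G" "H \<subseteq> G"
  shows "deg (G - H) i = deg G i - deg H i"
proof -
  have "{e \<in> G - H. i \<in> e} = {e \<in> G. i \<in> e} - {e \<in> H. i \<in> e}" by blast
  moreover have "card ({e \<in> G. i \<in> e} - {e \<in> H. i \<in> e}) = card {e \<in> G. i \<in> e} - card {e \<in> H. i \<in> e}"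
    by (intro card_Diff_subset rev_finite_subset[OF assms(1)]) (use assms(2) in auto)
  ultimately show ?thesis unfolding deg_def by simp
qed

lemma sum_deg_eq_twice_card:
  assumes "graph_on n E"
  shows "(\<Sum>a\<in>{1..n}. deg E a) = 2 * card E"
proof -
  have "(\<Sum>a\<in>{1..n}. deg E a) = (\<Sum>a\<in>{1..n}. \<Sum>e\<in>E. if a \<in> e then 1 else 0)"
    unfolding deg_def using graph_on_finite[OF assms] by (simp add: sum.If_cases Int_def)
  also have "\<dots> = (\<Sum>e\<in>E. \<Sum>a\<in>{1..n}. if a \<in> e then 1 else 0)" by (rule sum.swap)
  also have "\<dots> = (\<Sum>e\<in>E. 2)"
  proof (rule sum.cong)
    fix e assume "e \<in> E"
    then obtain p q where "e = {p, q}" "p \<in> {1..n}" "q \<in> {1..n}" "p \<noteq> q"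
      by (rule graph_on_edgeE[OF assms])
    then have "{1..n} \<inter> e = {p, q}" by auto
    with \<open>p \<noteq> q\<close> show "(\<Sum>a\<in>{1..n}. if a \<in> e then 1 else 0) = (2::nat)"
      by (simp add: sum.If_cases)
  qed simp
  finally show ?thesis by simp
qed

definition nbhd :: "nat set set \<Rightarrow> nat \<Rightarrow> nat set" where
  "nbhd E a = {b. {a, b} \<in> E}"

definition arcs :: "nat set set \<Rightarrow> (nat \<times> nat) set" where
  "arcs E = {(a, b). {a, b} \<in> E}"

lemma nbhd_subset: "graph_on n E \<Longrightarrow> nbhd E a \<subseteq> {1..n}"
  unfolding nbhd_def using graph_on_edgeD(2) by blast

lemma finite_nbhd: "graph_on n E \<Longrightarrow> finite (nbhd E a)"
  using nbhd_subset finite_subset finite_atLeastAtMost by metis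

lemma card_nbhd:
  assumes "graph_on n E"
  shows "card (nbhd E a) = deg E a"
proof -
  have "bij_betw (\<lambda>b. {a, b}) (nbhd E a) {e \<in> E. a \<in> e}"
  proof (rule bij_betwI')
    fix b c assume "b \<in> nbhd E a" "c \<in> nbhd E a"
    then have "a \<noteq> b" "a \<noteq> c" unfolding nbhd_def using graph_on_edgeD(3)[OF assms] by auto
    then show "({a, b} = {a, c}) = (b = c)" by (auto simp: doubleton_eq_iff)
  next
    fix b assume "b \<in> nbhd E a"
    then show "{a, b} \<in> {e \<in> E. a \<in> e}" unfolding nbhd_def by simp
  next
    fix e assume e: "e \<in> {e \<in> E. a \<in> e}"
    then obtain p q where "e = {p, q}" using graph_on_edgeE[OF assms] by blast
    with e have "e = {a, q} \<or> e = {a, p}" by auto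
    with e show "\<exists>b\<in>nbhd E a. e = {a, b}" unfolding nbhd_def by auto
  qed
  then show ?thesis unfolding deg_def by (rule bij_betw_same_card)
qed

lemma arcs_eq_Sigma: "graph_on n E \<Longrightarrow> arcs E = Sigma {1..n} (nbhd E)"
  unfolding arcs_def nbhd_def using graph_on_edgeD(1) by blast

lemma finite_arcs: "graph_on n E \<Longrightarrow> finite (arcs E)"
  by (simp add: arcs_eq_Sigma finite_nbhd)

lemma card_arcs: "graph_on n E \<Longrightarrow> card (arcs E) = (\<Sum>a\<in>{1..n}. deg E a)"
  by (simp add: arcs_eq_Sigma finite_nbhd card_nbhd)

lemma card_arcs_fst_le:
  assumes "graph_on n E" "finite S"
  shows "card {p \<in> arcs E. fst p \<in> S} \<le> (\<Sum>a\<in>S. deg E a)"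
proof -
  have "{p \<in> arcs E. fst p \<in> S} \<subseteq> Sigma S (nbhd E)" unfolding arcs_def nbhd_def by auto
  then have "card {p \<in> arcs E. fst p \<in> S} \<le> card (Sigma S (nbhd E))"
    using assms by (intro card_mono) (auto intro: finite_nbhd)
  also have "\<dots> = (\<Sum>a\<in>S. deg E a)" using assms by (simp add: finite_nbhd card_nbhd)
  finally show ?thesis .
qed

lemma card_arcs_snd_le:
  assumes "graph_on n E" "finite S"
  shows "card {p \<in> arcs E. snd p \<in> S} \<le> (\<Sum>a\<in>S. deg E a)"
proof -
  have "{p \<in> arcs E. snd p \<in> S} = prod.swap ` {p \<in> arcs E. fst p \<in> S}"
    by (force simp: arcs_def insert_commute)
  then have "card {p \<in> arcs E. snd p \<in> S} = card {p \<in> arcs E. fst p \<in> S}"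
    by (simp add: card_image)
  with card_arcs_fst_le[OF assms] show ?thesis by simp
qed

lemma d_le_Delta: "i \<in> {1..n} \<Longrightarrow> d i \<le> Delta n d"
  unfolding Delta_def by (rule Max_ge) auto

lemma deg_le_max_deg_graph: "i \<in> {1..n} \<Longrightarrow> deg H i \<le> max_deg_graph n H"
  unfolding max_deg_graph_def by (rule Max_ge) auto

lemma sum_le_card_mult_Delta:
  assumes "S \<subseteq> {1..n}"
  shows "(\<Sum>i\<in>S. d i) \<le> card S * Delta n d"
proof -
  have "(\<Sum>i\<in>S. d i) \<le> (\<Sum>i\<in>S. Delta n d)"
    using assms d_le_Delta by (intro sum_mono) blast
  then show ?thesis by simp
qed

lemma sum_mset_le_sum_take_sorted:
  fixes xs :: "nat list"
  assumes "sorted_wrt (\<ge>) xs" "X \<subseteq># mset xs" "size X \<le> k"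
  shows "sum_mset X \<le> sum_list (take k xs)"
  using assms
proof (induction xs arbitrary: X k)
  case Nil
  then show ?case by simp
next
  case (Cons y ys)
  show ?case
  proof (cases "X = {#}")
    case False
    then obtain k' where k: "k = Suc k'" using Cons.prems(3) by (cases k) auto
    have "\<exists>z X'. X = add_mset z X' \<and> z \<le> y \<and> X' \<subseteq># mset ys"
    proof (cases "y \<in># X")
      case True
      then obtain X' where "X = add_mset y X'" by (metis multi_member_split)
      then show ?thesis using Cons.prems(2) by auto
    next
      case y_notin: False
      obtain z X' where X: "X = add_mset z X'" using \<open>X \<noteq> {#}\<close> by (metis multiset_cases)
      have "X \<subseteq># mset ys"
        using Cons.prems(2) y_notin by (simp add: inter_add_left1 subset_mset.inf.absorb_iff2)
      then have "z \<in># mset ys" "X' \<subseteq># mset ys"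
        using mset_subset_eq_insertD[of z X' "mset ys"] unfolding X by auto
      then show ?thesis using X Cons.prems(1) by auto
    qed
    then obtain z X' where X: "X = add_mset z X'" "z \<le> y" "X' \<subseteq># mset ys" by blast
    have "sum_mset X' \<le> sum_list (take k' ys)"
      using Cons.prems(1,3) X(1,3) k by (intro Cons.IH) auto
    then show ?thesis using X k by simp
  qed simp
qed

lemma sum_le_Jsum:
  assumes "S \<subseteq> {1..n}" "card S \<le> Delta n d"
  shows "(\<Sum>i\<in>S. d i) \<le> Jsum n d"
proof -
  let ?xs = "rev (sort (map d [1..<n+1]))"
  have "finite S" using assms(1) by (rule finite_subset) simp
  have "mset ?xs = image_mset d (mset_set {1..<n+1})"
    by (simp only: mset_rev mset_sort mset_map mset_upt)
  moreover have "mset_set S \<subseteq># mset_set {1..<n+1}" using assms(1) \<open>finite S\<close> by auto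
  ultimately have "image_mset d (mset_set S) \<subseteq># mset ?xs"
    by (simp add: image_mset_subseteq_mono)
  then have "sum_mset (image_mset d (mset_set S)) \<le> sum_list (take (Delta n d) ?xs)"
    using assms(2) by (intro sum_mset_le_sum_take_sorted) (simp_all add: sorted_wrt_rev)
  then show ?thesis unfolding Jsum_def by (simp add: sum_unfold_sum_mset)
qed

section \<open>Switchings and double counting\<close>

definition switch :: "nat set set \<Rightarrow> nat set set \<Rightarrow> nat set set \<Rightarrow> nat set set" where
  "switch R A G = (G - R) \<union> A"

lemma switch_switch: "R \<subseteq> G \<Longrightarrow> A \<inter> G = {} \<Longrightarrow> switch A R (switch R A G) = G"
  unfolding switch_def by blast

lemma deg_switch:
  assumes "finite G" "finite A" "R \<subseteq> G" "A \<inter> G = {}" "deg R i = deg A i"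
  shows "deg (switch R A G) i = deg G i"
proof -
  have "{e \<in> switch R A G. i \<in> e} = {e \<in> G - R. i \<in> e} \<union> {e \<in> A. i \<in> e}"
    unfolding switch_def by blast
  moreover have "{e \<in> G - R. i \<in> e} \<inter> {e \<in> A. i \<in> e} = {}" using assms(4) by blast
  ultimately have "deg (switch R A G) i = deg (G - R) i + deg A i"
    unfolding deg_def using assms(1,2) by (simp add: card_Un_disjoint)
  also have "\<dots> = deg G i"
    using deg_Diff[OF assms(1,3), of i] deg_mono[OF assms(1,3), of i] assms(5) by simp
  finally show ?thesis .
qed

lemma switch_in_realizations:
  assumes "G \<in> realizations n d" "R \<subseteq> G" "A \<inter> G = {}" "A \<subseteq> all_edges n"
    and "\<And>i. deg R i = deg A i"
  shows "switch R A G \<in> realizations n d"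
proof -
  have "graph_on n G" "finite G" using assms(1) graph_on_finite by (auto simp: realizations_def)
  moreover have "finite A" using assms(4) finite_all_edges finite_subset by blast
  ultimately show ?thesis
    using assms deg_switch[of G A R] unfolding realizations_def graph_on_def switch_def by auto
qed

lemma card_Union_le_sum_list: "card (\<Union> (set Bs)) \<le> (\<Sum>B\<leftarrow>Bs. card B)"
proof (induction Bs)
  case (Cons B Bs)
  have "card (\<Union> (set (B # Bs))) \<le> card B + card (\<Union> (set Bs))"
    by (simp add: card_Un_le)
  with Cons.IH show ?case by simp
qed simp

lemma card_le_card_plus_cover:
  assumes "X \<subseteq> V \<union> \<Union> (set Bs)" "V \<subseteq> X" "\<forall>B\<in>set Bs. B \<subseteq> X"
  shows "card X \<le> card V + (\<Sum>B\<leftarrow>Bs. card B)"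
proof -
  have "X = V \<union> \<Union> (set Bs)" using assms by blast
  then have "card X \<le> card V + card (\<Union> (set Bs))" by (metis card_Un_le)
  with card_Union_le_sum_list[of Bs] show ?thesis by linarith
qed

lemma inj_on_switch:
  assumes "inj k" "\<And>G l. G \<in> X \<Longrightarrow> l \<in> P G \<Longrightarrow> R l \<subseteq> G \<and> A l \<inter> G = {}"
  shows "inj_on (\<lambda>(G, l). (switch (R l) (A l) G, k l)) (Sigma X P)"
proof (rule inj_onI, clarify)
  fix G l G' l'
  assume G: "G \<in> X" "l \<in> P G" and G': "G' \<in> X" "l' \<in> P G'"
    and eq: "switch (R l) (A l) G = switch (R l') (A l') G'" "k l = k l'"
  from eq(2) have "l' = l" using assms(1) by (simp add: inj_eq)
  have "G = switch (A l) (R l) (switch (R l) (A l) G)"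
    using assms(2)[OF G] by (simp add: switch_switch)
  also have "\<dots> = switch (A l) (R l) (switch (R l) (A l) G')"
    using eq(1) \<open>l' = l\<close> by simp
  also have "\<dots> = G'"
    using assms(2)[OF G'] \<open>l' = l\<close> by (simp add: switch_switch)
  finally show "G = G' \<and> l = l'" using \<open>l' = l\<close> by simp
qed

lemma card_Sigma_ge:
  fixes p :: real
  assumes "finite A" "\<And>a. a \<in> A \<Longrightarrow> finite (P a)" "\<And>a. a \<in> A \<Longrightarrow> p \<le> card (P a)"
  shows "card A * p \<le> card (Sigma A P)"
proof -
  have "card A * p = (\<Sum>a\<in>A. p)" by simp
  also have "\<dots> \<le> (\<Sum>a\<in>A. real (card (P a)))" using assms(3) by (rule sum_mono)
  also have "\<dots> = card (Sigma A P)" using assms(1,2) by simp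
  finally show ?thesis .
qed

lemma card_Sigma_le:
  fixes q :: real
  assumes "finite A" "\<And>a. a \<in> A \<Longrightarrow> finite (Q a)" "\<And>a. a \<in> A \<Longrightarrow> card (Q a) \<le> q"
  shows "card (Sigma A Q) \<le> card A * q"
proof -
  have "card (Sigma A Q) = (\<Sum>a\<in>A. real (card (Q a)))" using assms(1,2) by simp
  also have "\<dots> \<le> (\<Sum>a\<in>A. q)" using assms(3) by (rule sum_mono)
  also have "\<dots> = card A * q" by simp
  finally show ?thesis .
qed

lemma card_le_by_switching:
  fixes p q :: real
  assumes "finite A" "finite B" "\<And>b. b \<in> B \<Longrightarrow> finite (Q b)"
    and "inj_on f (Sigma A P)" "f ` Sigma A P \<subseteq> Sigma B Q"
    and "\<And>a. a \<in> A \<Longrightarrow> p \<le> card (P a)" "\<And>b. b \<in> B \<Longrightarrow> card (Q b) \<le> q"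
  shows "card A * p \<le> card B * q"
proof -
  have fin_B: "finite (Sigma B Q)" using assms(2,3) by blast
  then have "finite (Sigma A P)" using assms(4,5) by (rule inj_on_finite[rotated 2])
  then have fin_P: "finite (P a)" if "a \<in> A" for a
    by (rule rev_finite_subset[OF finite_imageI[of _ snd]]) (use that in force)
  have "card A * p \<le> card (Sigma A P)" using assms(1) fin_P assms(6) by (rule card_Sigma_ge)
  also have "\<dots> \<le> card (Sigma B Q)" using card_inj_on_le[OF assms(4,5) fin_B] by simp
  also have "\<dots> \<le> card B * q" using assms(2,3,7) by (rule card_Sigma_le)
  finally show ?thesis .
qed

lemma ratio_le_of_switching_count:
  fixes a b x M T S :: real
  assumes "0 \<le> a" "0 < a + b" "0 \<le> x" "0 \<le> M" "0 < a \<Longrightarrow> 0 < M"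
    and "a * (M - T) \<le> x * b" "T \<le> S" "0 < 1 - S / M + x / M"
  shows "a / (a + b) \<le> x / M * inverse (1 - S / M + x / M)"
proof (cases "a = 0")
  case True
  then show ?thesis using assms(3,4,8) by simp
next
  case False
  then have "0 < M" using assms(1,5) by simp
  then have eq: "1 - S / M + x / M = (M - S + x) / M" by (simp add: field_simps)
  with assms(8) \<open>0 < M\<close> have pos: "0 < M - S + x" by (simp add: zero_less_divide_iff)
  have "a * (M - S + x) \<le> a * (M - T + x)" using assms(1,7) by (simp add: mult_left_mono)
  also have "\<dots> \<le> x * (a + b)" using assms(6) by (simp add: algebra_simps)
  finally have "a / (a + b) \<le> x / (M - S + x)"
    using pos assms(2) by (simp add: divide_le_eq le_divide_eq mult.commute)
  then show ?thesis unfolding eq using \<open>0 < M\<close> by simp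
qed

lemma ratio_ge_of_switching_count:
  fixes a b x M T :: real
  assumes "0 \<le> a" "0 < a + b" "0 \<le> x" "0 \<le> M" "0 \<le> T"
    and "b * x * (M - T) \<le> a * M\<^sup>2"
  shows "x / M * ((1 - T / M) * inverse (1 + x / M)) \<le> a / (a + b)"
proof (cases "M = 0")
  case True
  then show ?thesis using assms(1,2) by simp
next
  case False
  then have "0 < M" "0 < M + x" using assms(3,4) by auto
  have "1 - T / M = (M - T) / M" "inverse (1 + x / M) = M / (M + x)"
    using \<open>0 < M\<close> \<open>0 < M + x\<close> by (simp_all add: field_simps)
  then have eq: "x / M * ((1 - T / M) * inverse (1 + x / M)) = x * (M - T) / (M * (M + x))"
    using \<open>0 < M\<close> by simp
  show ?thesis
  proof (cases "M \<le> T")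
    case True
    then have "x * (M - T) / (M * (M + x)) \<le> 0"
      using assms(3) \<open>0 < M\<close> \<open>0 < M + x\<close> by (simp add: divide_nonpos_pos mult_nonneg_nonpos)
    also have "0 \<le> a / (a + b)" using assms(1,2) by simp
    finally show ?thesis unfolding eq .
  next
    case False
    have "x * (M - T) * a \<le> x * M * a" using assms(1,3,5) by (simp add: mult_left_mono mult_right_mono)
    with assms(6) have "x * (M - T) * (a + b) \<le> a * (M * (M + x))"
      by (simp add: algebra_simps power2_eq_square)
    then show ?thesis unfolding eq using \<open>0 < M\<close> \<open>0 < M + x\<close> assms(2)
      by (simp add: divide_le_eq le_divide_eq mult.commute)
  qed
qed

section \<open>The conditioned space\<close>

locale conditioned_edge =
  fixes n :: nat and d :: "nat \<Rightarrow> nat" and H1 H2 :: "nat set set" and u v :: nat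
  assumes graph_H1: "graph_on n H1" and graph_H2: "graph_on n H2"
    and u_in: "u \<in> {1..n}" and v_in: "v \<in> {1..n}" and u_neq_v: "u \<noteq> v"
    and uv_notin: "{u, v} \<notin> H1 \<union> H2"
begin

definition Omega :: "nat set set set" where
  "Omega = {G \<in> realizations n d. H1 \<subseteq> G \<and> G \<inter> H2 = {}}"

definition Omega_edge :: "nat set set set" where
  "Omega_edge = {G \<in> Omega. {u, v} \<in> G}"

definition Omega_nonedge :: "nat set set set" where
  "Omega_nonedge = {G \<in> Omega. {u, v} \<notin> G}"

text \<open>The truncated subtraction is harmless: \<open>2 e(H\<^sub>1) \<le> M\<close> once \<open>Omega\<close> is nonempty
  (\<open>twice_card_H1_le\<close>).\<close>

definition Mfree :: nat where
  "Mfree = Msum n d - 2 * card H1"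

definition free_nbhd_pairs :: "nat set set \<Rightarrow> (nat \<times> nat) set" where
  "free_nbhd_pairs G = nbhd (G - H1) u \<times> nbhd (G - H1) v"

lemma finite_Omega: "finite Omega"
  unfolding Omega_def using finite_realizations by simp

lemma OmegaD:
  assumes "G \<in> Omega"
  shows "graph_on n G" "finite G" "\<And>i. i \<in> {1..n} \<Longrightarrow> deg G i = d i" "H1 \<subseteq> G" "G \<inter> H2 = {}"
  using assms graph_on_finite unfolding Omega_def realizations_def by auto

lemma graph_on_free: "G \<in> Omega \<Longrightarrow> graph_on n (G - H1)"
  using OmegaD(1) graph_on_subset by blast

lemma deg_free: "G \<in> Omega \<Longrightarrow> i \<in> {1..n} \<Longrightarrow> deg (G - H1) i = d i - deg H1 i"
  using deg_Diff[OF OmegaD(2,4)] OmegaD(3) by simp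

lemma sum_deg_H1_le:
  assumes "G \<in> Omega"
  shows "(\<Sum>i\<in>{1..n}. deg H1 i) \<le> Msum n d"
proof -
  have "(\<Sum>i\<in>{1..n}. deg H1 i) \<le> (\<Sum>i\<in>{1..n}. deg G i)"
    using deg_mono[OF OmegaD(2,4)[OF assms]] by (rule sum_mono)
  then show ?thesis unfolding Msum_def using OmegaD(3)[OF assms] by simp
qed

lemma twice_card_H1_le: "G \<in> Omega \<Longrightarrow> 2 * card H1 \<le> Msum n d"
  using sum_deg_H1_le sum_deg_eq_twice_card[OF graph_H1] by simp

lemma card_free_arcs:
  assumes "G \<in> Omega"
  shows "card (arcs (G - H1)) = Mfree"
proof -
  have "card (arcs (G - H1)) = (\<Sum>i\<in>{1..n}. d i - deg H1 i)"
    using card_arcs[OF graph_on_free[OF assms]] deg_free[OF assms] by simp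
  also have "\<dots> = Msum n d - (\<Sum>i\<in>{1..n}. deg H1 i)"
    unfolding Msum_def
  proof (intro sum_subtractf_nat ballI)
    fix i assume "i \<in> {1..n}"
    then show "deg H1 i \<le> d i" using deg_mono[OF OmegaD(2,4)[OF assms]] OmegaD(3)[OF assms] by metis
  qed
  finally show ?thesis unfolding Mfree_def sum_deg_eq_twice_card[OF graph_H1] .
qed

lemma card_free_nbhd_pairs:
  "G \<in> Omega \<Longrightarrow> card (free_nbhd_pairs G) = (d u - deg H1 u) * (d v - deg H1 v)"
  unfolding free_nbhd_pairs_def card_cartesian_product
  using card_nbhd[OF graph_on_free] deg_free u_in v_in by simp

lemma card_free_arcs_at_le:
  assumes "G \<in> Omega" "S \<subseteq> {1..n}"
  shows "card {p \<in> arcs (G - H1). fst p \<in> S} \<le> (\<Sum>i\<in>S. d i)"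
    and "card {p \<in> arcs (G - H1). snd p \<in> S} \<le> (\<Sum>i\<in>S. d i)"
proof -
  have "finite S" using assms(2) by (rule finite_subset) simp
  have "(\<Sum>i\<in>S. deg (G - H1) i) \<le> (\<Sum>i\<in>S. d i)"
    using assms deg_free by (intro sum_mono) auto
  then show "card {p \<in> arcs (G - H1). fst p \<in> S} \<le> (\<Sum>i\<in>S. d i)"
    and "card {p \<in> arcs (G - H1). snd p \<in> S} \<le> (\<Sum>i\<in>S. d i)"
    using card_arcs_fst_le[OF graph_on_free[OF assms(1)] \<open>finite S\<close>]
      card_arcs_snd_le[OF graph_on_free[OF assms(1)] \<open>finite S\<close>] by linarith+
qed

lemma card_free_arcs_at_vertex_le:
  assumes "G \<in> Omega" "w \<in> {1..n}"
  shows "card {p \<in> arcs (G - H1). fst p \<in> {w}} \<le> Delta n d"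
    and "card {p \<in> arcs (G - H1). snd p \<in> {w}} \<le> Delta n d"
  using card_free_arcs_at_le[OF assms(1), of "{w}"] d_le_Delta[OF assms(2), of d] assms(2) by auto

lemma card_free_arcs_at_nbhd_le:
  assumes "G \<in> Omega" "w \<in> {1..n}"
  shows "card {p \<in> arcs (G - H1). fst p \<in> nbhd G w} \<le> Jsum n d"
    and "card {p \<in> arcs (G - H1). snd p \<in> nbhd G w} \<le> Jsum n d"
proof -
  have G: "graph_on n G" using OmegaD(1)[OF assms(1)] .
  have "card (nbhd G w) = d w" using card_nbhd[OF G] OmegaD(3)[OF assms] by simp
  then have "card (nbhd G w) \<le> Delta n d" using d_le_Delta[OF assms(2)] by simp
  then have "(\<Sum>i\<in>nbhd G w. d i) \<le> Jsum n d" by (rule sum_le_Jsum[OF nbhd_subset[OF G]])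
  then show "card {p \<in> arcs (G - H1). fst p \<in> nbhd G w} \<le> Jsum n d"
    and "card {p \<in> arcs (G - H1). snd p \<in> nbhd G w} \<le> Jsum n d"
    using card_free_arcs_at_le[OF assms(1) nbhd_subset[OF G, of w]] by linarith+
qed

lemma card_free_arcs_at_nbhd_H2_le:
  assumes "G \<in> Omega"
  shows "card {p \<in> arcs (G - H1). fst p \<in> nbhd H2 w} \<le> deg H2 w * Delta n d"
    and "card {p \<in> arcs (G - H1). snd p \<in> nbhd H2 w} \<le> deg H2 w * Delta n d"
proof -
  have "(\<Sum>i\<in>nbhd H2 w. d i) \<le> deg H2 w * Delta n d"
    using sum_le_card_mult_Delta[OF nbhd_subset[OF graph_H2]] card_nbhd[OF graph_H2] by metis
  then show "card {p \<in> arcs (G - H1). fst p \<in> nbhd H2 w} \<le> deg H2 w * Delta n d"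
    and "card {p \<in> arcs (G - H1). snd p \<in> nbhd H2 w} \<le> deg H2 w * Delta n d"
    using card_free_arcs_at_le[OF assms nbhd_subset[OF graph_H2, of w]] by linarith+
qed

lemma switch_in_Omega:
  assumes "G \<in> Omega" "R \<subseteq> G - H1" "A \<inter> (G \<union> H2) = {}" "A \<subseteq> all_edges n"
    and "\<And>i. deg R i = deg A i"
  shows "switch R A G \<in> Omega"
proof -
  have "G \<in> realizations n d" using assms(1) unfolding Omega_def by simp
  then have "switch R A G \<in> realizations n d"
    using assms(2-5) by (intro switch_in_realizations) auto
  then show ?thesis using assms(1-3) unfolding Omega_def switch_def by blast
qed

lemma card_Omega_split: "card Omega = card Omega_edge + card Omega_nonedge"
proof -
  have "Omega = Omega_edge \<union> Omega_nonedge" "Omega_edge \<inter> Omega_nonedge = {}"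
    unfolding Omega_edge_def Omega_nonedge_def by auto
  then show ?thesis using finite_Omega by (simp add: card_Un_disjoint)
qed

lemma cond_prob_edge_eq:
  "cond_prob_edge n d H1 H2 u v
    = real (card Omega_edge) / (real (card Omega_edge) + real (card Omega_nonedge))"
proof -
  have "{G \<in> realizations n d. H1 \<subseteq> G \<and> G \<inter> H2 = {} \<and> {u, v} \<in> G} = Omega_edge"
    unfolding Omega_edge_def Omega_def by auto
  then show ?thesis unfolding cond_prob_edge_def Omega_def[symmetric] by (simp add: card_Omega_split)
qed

lemma Mfree_pos: "Omega_edge \<noteq> {} \<Longrightarrow> 0 < Mfree"
proof -
  assume "Omega_edge \<noteq> {}"
  then obtain G where "G \<in> Omega" "{u, v} \<in> G" unfolding Omega_edge_def by blast
  then have "(u, v) \<in> arcs (G - H1)" using uv_notin unfolding arcs_def by auto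
  then show "0 < Mfree"
    using card_free_arcs[OF \<open>G \<in> Omega\<close>] finite_arcs[OF graph_on_free[OF \<open>G \<in> Omega\<close>]]
    by (metis card_gt_0_iff empty_iff)
qed

subsection \<open>Forward switching: \<open>uv, ab \<mapsto> ua, vb\<close>\<close>

definition fwd_arcs :: "nat set set \<Rightarrow> (nat \<times> nat) set" where
  "fwd_arcs G = {(a, b) \<in> arcs (G - H1).
     a \<notin> {u, v} \<and> b \<notin> {u, v} \<and> {u, a} \<notin> G \<union> H2 \<and> {v, b} \<notin> G \<union> H2}"

lemma card_fwd_arcs_ge:
  assumes "G \<in> Omega"
  shows "Mfree \<le> card (fwd_arcs G) + (2 * Jsum n d + 4 * Delta n d + (deg H2 u + deg H2 v) * Delta n d)"
proof -
  let ?X = "arcs (G - H1)"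
  define Bs where "Bs = [{p \<in> ?X. fst p \<in> {u}}, {p \<in> ?X. fst p \<in> {v}},
    {p \<in> ?X. snd p \<in> {u}}, {p \<in> ?X. snd p \<in> {v}},
    {p \<in> ?X. fst p \<in> nbhd G u}, {p \<in> ?X. snd p \<in> nbhd G v},
    {p \<in> ?X. fst p \<in> nbhd H2 u}, {p \<in> ?X. snd p \<in> nbhd H2 v}]"
  have "?X \<subseteq> fwd_arcs G \<union> \<Union> (set Bs)"
    unfolding fwd_arcs_def Bs_def nbhd_def by auto
  then have "card ?X \<le> card (fwd_arcs G) + (\<Sum>B\<leftarrow>Bs. card B)"
    by (rule card_le_card_plus_cover) (auto simp: fwd_arcs_def Bs_def)
  also have "(\<Sum>B\<leftarrow>Bs. card B) \<le> 2 * Jsum n d + 4 * Delta n d + (deg H2 u + deg H2 v) * Delta n d"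
    unfolding Bs_def
    using card_free_arcs_at_vertex_le[OF assms u_in] card_free_arcs_at_vertex_le[OF assms v_in]
      card_free_arcs_at_nbhd_le[OF assms u_in] card_free_arcs_at_nbhd_le[OF assms v_in]
      card_free_arcs_at_nbhd_H2_le[OF assms, of u] card_free_arcs_at_nbhd_H2_le[OF assms, of v]
    by (simp add: algebra_simps)
  finally show ?thesis using card_free_arcs[OF assms] by simp
qed

lemma fwd_switch_into_Omega_nonedge:
  assumes "G \<in> Omega_edge" "(a, b) \<in> fwd_arcs G"
  shows "switch {{u, v}, {a, b}} {{u, a}, {v, b}} G \<in> Omega_nonedge" (is "?G' \<in> _")
    and "(a, b) \<in> free_nbhd_pairs (switch {{u, v}, {a, b}} {{u, a}, {v, b}} G)"
proof -
  have G: "G \<in> Omega" "{u, v} \<in> G" using assms(1) unfolding Omega_edge_def by auto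
  have ab: "{a, b} \<in> G - H1" "a \<notin> {u, v}" "b \<notin> {u, v}" "{u, a} \<notin> G \<union> H2" "{v, b} \<notin> G \<union> H2"
    using assms(2) unfolding fwd_arcs_def arcs_def by auto
  have "a \<in> {1..n}" "b \<in> {1..n}" "a \<noteq> b"
    using graph_on_edgeD[OF OmegaD(1)[OF G(1)]] ab(1) by auto
  have "?G' \<in> Omega"
  proof (rule switch_in_Omega[OF G(1)])
    show "{{u, v}, {a, b}} \<subseteq> G - H1" using G(2) ab(1) uv_notin by auto
    show "{{u, a}, {v, b}} \<inter> (G \<union> H2) = {}" using ab(4,5) by auto
    show "{{u, a}, {v, b}} \<subseteq> all_edges n"
      unfolding all_edges_def using u_in v_in \<open>a \<in> {1..n}\<close> \<open>b \<in> {1..n}\<close> ab(2,3) by blast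
    show "deg {{u, v}, {a, b}} i = deg {{u, a}, {v, b}} i" for i
      using ab(2,3) u_neq_v \<open>a \<noteq> b\<close> by (auto simp: deg_insert deg_empty doubleton_eq_iff)
  qed
  moreover have "{u, v} \<notin> ?G'"
    using ab(2,3) u_neq_v unfolding switch_def by (auto simp: doubleton_eq_iff)
  ultimately show "?G' \<in> Omega_nonedge" unfolding Omega_nonedge_def by simp
  have "{u, a} \<in> ?G' - H1" "{v, b} \<in> ?G' - H1"
    using ab(4,5) OmegaD(4)[OF G(1)] unfolding switch_def by auto
  then show "(a, b) \<in> free_nbhd_pairs ?G'" unfolding free_nbhd_pairs_def nbhd_def by simp
qed

lemma card_Omega_edge_le:
  "real (card Omega_edge)
     * (real Mfree - real (2 * Jsum n d + 4 * Delta n d + (deg H2 u + deg H2 v) * Delta n d))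
   \<le> real (card Omega_nonedge) * real ((d u - deg H1 u) * (d v - deg H1 v))"
proof -
  let ?R = "\<lambda>(a, b). {{u, v}, {a, b}}" and ?A = "\<lambda>(a, b). {{u, a}, {v, b}}"
  let ?f = "\<lambda>(G, l). (switch (?R l) (?A l) G, id l)"
  have inj: "inj_on ?f (Sigma Omega_edge fwd_arcs)"
    by (rule inj_on_switch) (auto simp: Omega_edge_def fwd_arcs_def arcs_def split: prod.splits)
  have img: "?f ` Sigma Omega_edge fwd_arcs \<subseteq> Sigma Omega_nonedge free_nbhd_pairs"
    using fwd_switch_into_Omega_nonedge by auto
  have fin: "finite Omega_edge" "finite Omega_nonedge"
    using finite_Omega unfolding Omega_edge_def Omega_nonedge_def by simp_all
  have fin_Q: "finite (free_nbhd_pairs G)" if "G \<in> Omega_nonedge" for G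
    using that finite_nbhd[OF graph_on_free]
    unfolding Omega_nonedge_def free_nbhd_pairs_def by simp
  have lower: "real Mfree - real (2 * Jsum n d + 4 * Delta n d + (deg H2 u + deg H2 v) * Delta n d)
      \<le> real (card (fwd_arcs G))" if "G \<in> Omega_edge" for G
  proof -
    have "G \<in> Omega" using that unfolding Omega_edge_def by simp
    from card_fwd_arcs_ge[OF this] show ?thesis by (simp only: of_nat_add[symmetric] of_nat_le_iff)
  qed
  have upper: "real (card (free_nbhd_pairs G)) \<le> real ((d u - deg H1 u) * (d v - deg H1 v))"
    if "G \<in> Omega_nonedge" for G
    using card_free_nbhd_pairs[of G] that unfolding Omega_nonedge_def by simp
  show ?thesis by (rule card_le_by_switching[OF fin fin_Q inj img lower upper])
qed

subsection \<open>Backward switching: \<open>ua, vb, cw \<mapsto> uv, ac, bw\<close>\<close>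

definition bwd_arcs :: "nat set set \<Rightarrow> nat \<Rightarrow> nat \<Rightarrow> (nat \<times> nat) set" where
  "bwd_arcs G a b = {(c, w) \<in> arcs (G - H1).
     c \<notin> {u, v, a, b} \<and> w \<notin> {u, v, a, b} \<and> {a, c} \<notin> G \<union> H2 \<and> {b, w} \<notin> G \<union> H2}"

lemma free_nbhd_pairsD:
  assumes "G \<in> Omega_nonedge" "(a, b) \<in> free_nbhd_pairs G"
  shows "{u, a} \<in> G - H1" "{v, b} \<in> G - H1" "a \<in> {1..n}" "b \<in> {1..n}" "a \<notin> {u, v}" "b \<notin> {u, v}"
proof -
  have G: "graph_on n G" "{u, v} \<notin> G"
    using assms(1) OmegaD(1) unfolding Omega_nonedge_def by auto
  show e: "{u, a} \<in> G - H1" "{v, b} \<in> G - H1"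
    using assms(2) unfolding free_nbhd_pairs_def nbhd_def by auto
  show "a \<in> {1..n}" "b \<in> {1..n}" using graph_on_edgeD(2)[OF G(1)] e by blast+
  show "a \<notin> {u, v}" "b \<notin> {u, v}"
    using graph_on_edgeD(3)[OF G(1)] e G(2) by (auto simp: insert_commute)
qed

lemma card_bwd_arcs_ge:
  assumes "G \<in> Omega_nonedge" "(a, b) \<in> free_nbhd_pairs G"
  shows "Mfree \<le> card (bwd_arcs G a b) + (2 * Jsum n d + 6 * Delta n d + 2 * max_deg_graph n H2 * Delta n d)"
proof -
  have G: "G \<in> Omega" using assms(1) unfolding Omega_nonedge_def by simp
  note ab = free_nbhd_pairsD[OF assms]
  \<comment> \<open>Arcs \<open>cw\<close> with \<open>c = u\<close> or \<open>w = v\<close> need no bound of their own: then \<open>c \<in> N(a)\<close>, resp. \<open>w \<in> N(b)\<close>.\<close>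
  have "{a, u} \<in> G" "{b, v} \<in> G" using ab(1,2) by (auto simp: insert_commute)
  let ?X = "arcs (G - H1)"
  define Bs where "Bs = [{p \<in> ?X. fst p \<in> nbhd G a}, {p \<in> ?X. snd p \<in> nbhd G b},
    {p \<in> ?X. fst p \<in> nbhd H2 a}, {p \<in> ?X. snd p \<in> nbhd H2 b},
    {p \<in> ?X. fst p \<in> {v}}, {p \<in> ?X. fst p \<in> {a}}, {p \<in> ?X. fst p \<in> {b}},
    {p \<in> ?X. snd p \<in> {u}}, {p \<in> ?X. snd p \<in> {a}}, {p \<in> ?X. snd p \<in> {b}}]"
  have "?X \<subseteq> bwd_arcs G a b \<union> \<Union> (set Bs)"
    using \<open>{a, u} \<in> G\<close> \<open>{b, v} \<in> G\<close> unfolding bwd_arcs_def Bs_def nbhd_def by auto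
  then have "card ?X \<le> card (bwd_arcs G a b) + (\<Sum>B\<leftarrow>Bs. card B)"
    by (rule card_le_card_plus_cover) (auto simp: bwd_arcs_def Bs_def)
  also have "(\<Sum>B\<leftarrow>Bs. card B) \<le> 2 * Jsum n d + 6 * Delta n d + 2 * max_deg_graph n H2 * Delta n d"
  proof -
    have "deg H2 a * Delta n d \<le> max_deg_graph n H2 * Delta n d"
      "deg H2 b * Delta n d \<le> max_deg_graph n H2 * Delta n d"
      using deg_le_max_deg_graph ab(3,4) by (simp_all add: mult_right_mono)
    then show ?thesis
      unfolding Bs_def list.map sum_list_simps
      using card_free_arcs_at_vertex_le[OF G u_in] card_free_arcs_at_vertex_le[OF G v_in]
        card_free_arcs_at_vertex_le[OF G ab(3)] card_free_arcs_at_vertex_le[OF G ab(4)]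
        card_free_arcs_at_nbhd_le[OF G ab(3)] card_free_arcs_at_nbhd_le[OF G ab(4)]
        card_free_arcs_at_nbhd_H2_le[OF G, of a] card_free_arcs_at_nbhd_H2_le[OF G, of b]
      by linarith
  qed
  finally show ?thesis using card_free_arcs[OF G] by simp
qed

lemma bwd_switch_into_Omega_edge:
  assumes "G \<in> Omega_nonedge" "(a, b) \<in> free_nbhd_pairs G" "(c, w) \<in> bwd_arcs G a b"
  shows "switch {{u, a}, {v, b}, {c, w}} {{u, v}, {a, c}, {b, w}} G \<in> Omega_edge" (is "?G' \<in> _")
    and "((a, c), (b, w)) \<in> arcs (switch {{u, a}, {v, b}, {c, w}} {{u, v}, {a, c}, {b, w}} G - H1)
      \<times> arcs (switch {{u, a}, {v, b}, {c, w}} {{u, v}, {a, c}, {b, w}} G - H1)"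
proof -
  have G: "G \<in> Omega" "{u, v} \<notin> G" using assms(1) unfolding Omega_nonedge_def by auto
  note ab = free_nbhd_pairsD[OF assms(1,2)]
  have cw: "{c, w} \<in> G - H1" "c \<notin> {u, v, a, b}" "w \<notin> {u, v, a, b}"
    "{a, c} \<notin> G \<union> H2" "{b, w} \<notin> G \<union> H2"
    using assms(3) unfolding bwd_arcs_def arcs_def by auto
  have "c \<in> {1..n}" "w \<in> {1..n}" "c \<noteq> w"
    using graph_on_edgeD[OF OmegaD(1)[OF G(1)]] cw(1) by auto
  have "?G' \<in> Omega"
  proof (rule switch_in_Omega[OF G(1)])
    show "{{u, a}, {v, b}, {c, w}} \<subseteq> G - H1" using ab(1,2) cw(1) by auto
    show "{{u, v}, {a, c}, {b, w}} \<inter> (G \<union> H2) = {}" using G(2) uv_notin cw(4,5) by auto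
    show "{{u, v}, {a, c}, {b, w}} \<subseteq> all_edges n"
      unfolding all_edges_def using u_in v_in u_neq_v ab(3,4) cw(2,3) \<open>c \<in> {1..n}\<close> \<open>w \<in> {1..n}\<close>
      by blast
    show "deg {{u, a}, {v, b}, {c, w}} i = deg {{u, v}, {a, c}, {b, w}} i" for i
      using ab(5,6) cw(2,3) u_neq_v \<open>c \<noteq> w\<close> by (auto simp: deg_insert deg_empty doubleton_eq_iff)
  qed
  then show "?G' \<in> Omega_edge" unfolding Omega_edge_def switch_def by simp
  have "{a, c} \<in> ?G' - H1" "{b, w} \<in> ?G' - H1"
    using cw(4,5) OmegaD(4)[OF G(1)] unfolding switch_def by auto
  then show "((a, c), (b, w)) \<in> arcs (?G' - H1) \<times> arcs (?G' - H1)" unfolding arcs_def by simp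
qed

definition bwd_switchings :: "nat set set \<Rightarrow> ((nat \<times> nat) \<times> (nat \<times> nat)) set" where
  "bwd_switchings G = Sigma (free_nbhd_pairs G) (\<lambda>(a, b). bwd_arcs G a b)"

lemma card_bwd_switchings_ge:
  assumes "G \<in> Omega_nonedge"
  shows "real ((d u - deg H1 u) * (d v - deg H1 v))
      * (real Mfree - real (2 * Jsum n d + 6 * Delta n d + 2 * max_deg_graph n H2 * Delta n d))
    \<le> real (card (bwd_switchings G))"
proof -
  let ?K = "real Mfree - real (2 * Jsum n d + 6 * Delta n d + 2 * max_deg_graph n H2 * Delta n d)"
  have G: "G \<in> Omega" using assms unfolding Omega_nonedge_def by simp
  have "?K \<le> real (card (case l of (a, b) \<Rightarrow> bwd_arcs G a b))" if "l \<in> free_nbhd_pairs G" for l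
  proof (cases l)
    case (Pair a b)
    from card_bwd_arcs_ge[OF assms that[unfolded Pair]] show ?thesis
      unfolding Pair by (simp only: of_nat_add[symmetric] of_nat_le_iff prod.case)
  qed
  moreover have "finite (case l of (a, b) \<Rightarrow> bwd_arcs G a b)" for l
  proof (cases l)
    case (Pair a b)
    have "bwd_arcs G a b \<subseteq> arcs (G - H1)" unfolding bwd_arcs_def by auto
    then show ?thesis
      unfolding Pair using finite_arcs[OF graph_on_free[OF G]] by (simp add: finite_subset)
  qed
  ultimately have "real (card (free_nbhd_pairs G)) * ?K \<le> real (card (bwd_switchings G))"
    using finite_nbhd[OF graph_on_free[OF G]] unfolding free_nbhd_pairs_def bwd_switchings_def
    by (intro card_Sigma_ge) auto
  then show ?thesis using card_free_nbhd_pairs[OF G] by simp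
qed

lemma card_Omega_nonedge_le:
  "real (card Omega_nonedge) * (real ((d u - deg H1 u) * (d v - deg H1 v))
     * (real Mfree - real (2 * Jsum n d + 6 * Delta n d + 2 * max_deg_graph n H2 * Delta n d)))
   \<le> real (card Omega_edge) * real Mfree ^ 2"
proof -
  let ?Q = "\<lambda>G. arcs (G - H1) \<times> arcs (G - H1)"
  let ?R = "\<lambda>((a, b), (c, w)). {{u, a}, {v, b}, {c, w}}"
  let ?A = "\<lambda>((a, b), (c, w)). {{u, v}, {a, c}, {b, w}}"
  let ?k = "\<lambda>((a, b), (c, w)). ((a, c), (b, w))"
  let ?f = "\<lambda>(G, l). (switch (?R l) (?A l) G, ?k l)"
  have "inj ?k" by (rule injI) (auto split: prod.splits)
  then have inj: "inj_on ?f (Sigma Omega_nonedge bwd_switchings)"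
    by (rule inj_on_switch) (auto simp: Omega_nonedge_def bwd_switchings_def free_nbhd_pairs_def
      nbhd_def bwd_arcs_def arcs_def split: prod.splits)
  have img: "?f ` Sigma Omega_nonedge bwd_switchings \<subseteq> Sigma Omega_edge ?Q"
    using bwd_switch_into_Omega_edge by (auto simp: bwd_switchings_def)
  have fin: "finite Omega_nonedge" "finite Omega_edge"
    using finite_Omega unfolding Omega_edge_def Omega_nonedge_def by simp_all
  have fin_Q: "finite (?Q G)" if "G \<in> Omega_edge" for G
    using that finite_arcs[OF graph_on_free] unfolding Omega_edge_def by simp
  have upper: "real (card (?Q G)) \<le> real Mfree ^ 2" if "G \<in> Omega_edge" for G
    using that unfolding Omega_edge_def by (simp add: card_cartesian_product card_free_arcs power2_eq_square)
  show ?thesis by (rule card_le_by_switching[OF fin fin_Q inj img card_bwd_switchings_ge upper])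
qed

lemma real_Mfree: "Omega \<noteq> {} \<Longrightarrow> real Mfree = real (Msum n d) - 2 * real (card H1)"
  using twice_card_H1_le unfolding Mfree_def by (auto simp: of_nat_diff)

lemma card_Omega_parts_pos: "Omega \<noteq> {} \<Longrightarrow> 0 < card Omega_edge + card Omega_nonedge"
  using finite_Omega card_Omega_split by (metis card_gt_0_iff)

lemma cond_prob_edge_le:
  assumes "Omega \<noteq> {}"
  defines "M' \<equiv> real (Msum n d) - 2 * real (card H1)"
    and "x \<equiv> real (d u - deg H1 u) * real (d v - deg H1 v)"
    and "D \<equiv> real (Delta n d)"
    and "J \<equiv> real (Jsum n d)"
  assumes pos: "0 < 1 - A / M' - B / M' ^ 2 + x / M'"
    and A: "2 * J + 4 * D + D * (real (deg H2 u) + real (deg H2 v)) \<le> A" and B: "0 \<le> B"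
  shows "cond_prob_edge n d H1 H2 u v \<le> x / M' * inverse (1 - A / M' - B / M' ^ 2 + x / M')"
proof -
  let ?a = "real (card Omega_edge)" and ?b = "real (card Omega_nonedge)"
  let ?T = "2 * J + 4 * D + D * (real (deg H2 u) + real (deg H2 v))"
  have M': "M' = real Mfree" using real_Mfree[OF assms(1)] unfolding M'_def by simp
  have eq: "1 - A / M' - B / M' ^ 2 + x / M' = 1 - (A + B / M') / M' + x / M'"
    by (simp add: add_divide_distrib divide_divide_eq_left power2_eq_square)
  have "?a * (M' - ?T) \<le> x * ?b"
    using card_Omega_edge_le unfolding M' x_def J_def D_def of_nat_mult of_nat_add
    by (simp add: algebra_simps)
  moreover have "?T \<le> A + B / M'" using A B unfolding M' by (simp add: add_increasing2)
  moreover have "0 < ?a \<Longrightarrow> 0 < M'" using Mfree_pos unfolding M' by fastforce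
  moreover have "0 < ?a + ?b" using card_Omega_parts_pos[OF assms(1)] by linarith
  moreover have "0 \<le> x" "0 \<le> M'" unfolding x_def M' by simp_all
  ultimately show ?thesis
    unfolding cond_prob_edge_eq eq using pos[unfolded eq]
    by (intro ratio_le_of_switching_count[where T = ?T]) simp_all
qed

lemma cond_prob_edge_ge:
  assumes "Omega \<noteq> {}"
  defines "M' \<equiv> real (Msum n d) - 2 * real (card H1)"
    and "x \<equiv> real (d u - deg H1 u) * real (d v - deg H1 v)"
    and "D \<equiv> real (Delta n d)"
    and "J \<equiv> real (Jsum n d)"
  shows "x / M' * ((1 - (2 * J + 6 * D + 2 * real (max_deg_graph n H2) * D) / M') * inverse (1 + x / M'))
    \<le> cond_prob_edge n d H1 H2 u v"
proof -
  let ?a = "real (card Omega_edge)" and ?b = "real (card Omega_nonedge)"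
  have M': "M' = real Mfree" using real_Mfree[OF assms(1)] unfolding M'_def by simp
  have "?b * x * (M' - (2 * J + 6 * D + 2 * real (max_deg_graph n H2) * D)) \<le> ?a * M'\<^sup>2"
    using card_Omega_nonedge_le unfolding M' x_def J_def D_def of_nat_mult of_nat_add
    by (simp add: algebra_simps)
  moreover have "0 < ?a + ?b" using card_Omega_parts_pos[OF assms(1)] by linarith
  ultimately show ?thesis
    unfolding cond_prob_edge_eq M' x_def J_def D_def by (intro ratio_ge_of_switching_count) simp_all
qed

end

theorem theorem1p1:
  fixes n :: nat and d :: "nat \<Rightarrow> nat" and H1 H2 :: "nat set set" and u v :: nat
  assumes "graphical n d"
    and "graph_on n H1" and "graph_on n H2" and "H1 \<inter> H2 = {}"
    and "\<forall>i\<in>{1..n}. deg H1 i \<le> d i"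
    and "u \<in> {1..n}" and "v \<in> {1..n}" and "u \<noteq> v"
    and "{u, v} \<notin> H1 \<union> H2"
    and "{G \<in> realizations n d. H1 \<subseteq> G \<and> G \<inter> H2 = {}} \<noteq> {}"
  defines "M' \<equiv> real (Msum n d) - 2 * real (card H1)"
    and "x \<equiv> real (d u - deg H1 u) * real (d v - deg H1 v)"
    and "D \<equiv> real (Delta n d)"
    and "J \<equiv> real (Jsum n d)"
  shows "(1 - (3 * J + D * (8 + real (deg H2 u) + real (deg H2 v))) / M'
            - 2 * real (card H2) * D ^ 2 / M' ^ 2 + x / M' > 0 \<longrightarrow>
         cond_prob_edge n d H1 H2 u v \<le> x / M' *
           inverse (1 - (3 * J + D * (8 + real (deg H2 u) + real (deg H2 v))) / M'
            - 2 * real (card H2) * D ^ 2 / M' ^ 2 + x / M'))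
     \<and> cond_prob_edge n d H1 H2 u v \<ge> x / M' *
           ((1 - (2 * J + 6 * D + 2 * real (max_deg_graph n H2) * D) / M')
            * inverse (1 + x / M'))"
proof -
  \<comment> \<open>The assumptions \<open>graphical n d\<close>, \<open>H1 \<inter> H2 = {}\<close> and \<open>d\<^sup>H\<^sup>1 \<preceq> d\<close> follow from the last one.\<close>
  have conditioned: "conditioned_edge n H1 H2 u v" using assms(2,3,6-9) by unfold_locales
  have Omega: "conditioned_edge.Omega n d H1 H2 \<noteq> {}"
    using assms(10) by (simp add: conditioned_edge.Omega_def[OF conditioned])
  have "0 \<le> J" "0 \<le> D" unfolding J_def D_def by simp_all
  then show ?thesis
    using conditioned_edge.cond_prob_edge_le[OF conditioned Omega,
        where A = "3 * J + D * (8 + real (deg H2 u) + real (deg H2 v))" and B = "2 * real (card H2) * D ^ 2"]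
      conditioned_edge.cond_prob_edge_ge[OF conditioned Omega]
    unfolding M'_def x_def D_def J_def by (simp add: algebra_simps)
qed

end
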